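(* For every $U\in U(4)$ there exist $U_1,U_2,U_3,U_4,U_5,U_6\in U(2)$ such that $$U=(U_1\otimes U_2)\,\cdot\,\mathtt{botCNOT}\,\cdot\,\begin{pmatrix}\mathbf{1}&0\\0&U_3\end{pmatrix}\,\cdot\,(\mathbf{1}\otimes U_4)\,\cdot\,\mathtt{botCNOT}\,\cdot\,(U_5\otimes U_6),$$ where $\begin{pmatrix}\mathbf{1}&0\\0&U_3\end{pmatrix}$ is the $4\times4$ block-diagonal matrix with $2\times 2$ blocks $\mathbf{1}$ and $U_3$.
   Context: $U(n)$ is the group of $n\times n$ unitary matrices, $\mathbf{1}$ the $2\times 2$ identity, $\otimes$ the Kronecker product with respect to the ordered basis $|00\rangle,|01\rangle,|10\rangle,|11\rangle$, and $\cdot$ the matrix product. $\mathtt{botCNOT}$ is the permutation matrix $\begin{pmatrix}1&0&0&0\\0&0&0&1\\0&0&1&0\\0&1&0&0\end{pmatrix}$ (swapping $|01\rangle\leftrightarrow|11\rangle$). *)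

theory Defs
  imports "Jordan_Normal_Form.Matrix"
begin

definition adj :: "complex mat \<Rightarrow> complex mat" where
  "adj A = mat (dim_col A) (dim_row A) (\<lambda>(i, j). cnj (A $$ (j, i)))"

definition unitary :: "nat \<Rightarrow> complex mat \<Rightarrow> bool" where
  "unitary n U \<longleftrightarrow> U \<in> carrier_mat n n \<and> adj U * U = 1\<^sub>m n \<and> U * adj U = 1\<^sub>m n"

text \<open>Kronecker product of two 2x2 matrices, w.r.t. the ordered basis
  |00>,|01>,|10>,|11> (index 2*a+b for |ab>).\<close>
definition kron2 :: "complex mat \<Rightarrow> complex mat \<Rightarrow> complex mat" where
  "kron2 A B = mat 4 4 (\<lambda>(i, j). A $$ (i div 2, j div 2) * B $$ (i mod 2, j mod 2))"

definition botCNOT :: "complex mat" where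
  "botCNOT = mat_of_rows_list 4 [[1,0,0,0],[0,0,0,1],[0,0,1,0],[0,1,0,0]]"

definition ctrl :: "complex mat \<Rightarrow> complex mat" where
  "ctrl U = four_block_mat (1\<^sub>m 2) (0\<^sub>m 2 2) (0\<^sub>m 2 2) U"

end

theory Submission
  imports Defs "Jordan_Normal_Form.Schur_Decomposition" "HOL-Combinatorics.Transposition"
begin

(* Let J be the spin flip x \<mapsto> (\<sigma>y \<otimes> \<sigma>y) conj x, an antiunitary involution, and
   \<gamma>(U) = J U\<dagger> J U. Since \<gamma>(U) is unitary and satisfies \<gamma> J \<gamma> = J, it has an
   orthonormal eigenbasis and J preserves its eigenspaces, so it has two orthonormal J-fixed
   eigenvectors f1, f2; suitable phases zk then make gk = zk U fk J-fixed too. For an orthonormal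
   J-fixed pair, f1 + i f2 is a product vector, so there are local unitaries L2 and L1 whose
   columns 0 and 3 span the plane of f1, f2 and the plane of g1, g2. Hence V = L1\<dagger> U L2
   preserves span{e0, e3} and span{e1, e2}. Conjugating by botCNOT, which swaps e1 and e3, makes V
   block diagonal, and every block-diagonal unitary diag(A, D) equals ctrl(D A\<dagger>) (1 \<otimes> A). *)

section \<open>Vectors and inner products\<close>

lemma less_4_cases_nat: "(i::nat) < 4 \<Longrightarrow> i = 0 \<or> i = 1 \<or> i = 2 \<or> i = 3"
  by auto

lemma less_2_cases_nat: "(i::nat) < 2 \<Longrightarrow> i = 0 \<or> i = 1"
  by auto

lemma sum_atLeast0LessThan_4:
  "(\<Sum>i = 0..<4::nat. f i) = f 0 + f 1 + f 2 + (f 3 :: 'a :: comm_monoid_add)"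
  by (simp add: eval_nat_numeral atLeast0_lessThan_Suc add.commute add.left_commute)

lemma sum_atLeast0LessThan_2: "(\<Sum>i = 0..<2::nat. f i) = f 0 + (f 1 :: 'a :: comm_monoid_add)"
  by (simp add: eval_nat_numeral atLeast0_lessThan_Suc add.commute)

lemma diff_vec_eq_0_iff:
  fixes x y :: "'a :: ab_group_add vec"
  shows "x \<in> carrier_vec n \<Longrightarrow> y \<in> carrier_vec n \<Longrightarrow> x - y = 0\<^sub>v n \<longleftrightarrow> x = y"
  by (auto simp: vec_eq_iff)

lemma cscalar_prod_add_left:
  fixes x y z :: "complex vec"
  assumes "x \<in> carrier_vec n" "y \<in> carrier_vec n" "z \<in> carrier_vec n"
  shows "(x + y) \<bullet>c z = x \<bullet>c z + y \<bullet>c z"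
  using assms by (simp add: add_scalar_prod_distrib[of _ n])

lemma cscalar_prod_diff_left:
  fixes x y z :: "complex vec"
  assumes "x \<in> carrier_vec n" "y \<in> carrier_vec n" "z \<in> carrier_vec n"
  shows "(x - y) \<bullet>c z = x \<bullet>c z - y \<bullet>c z"
  using assms by (simp add: minus_scalar_prod_distrib[of _ n])

lemma cscalar_prod_smult_left:
  fixes x y :: "complex vec"
  assumes "x \<in> carrier_vec n" "y \<in> carrier_vec n"
  shows "(a \<cdot>\<^sub>v x) \<bullet>c y = a * (x \<bullet>c y)"
  using assms by (simp add: smult_scalar_prod_distrib[of _ n])

lemma cscalar_prod_smult_right:
  fixes x y :: "complex vec"
  assumes "x \<in> carrier_vec n" "y \<in> carrier_vec n"
  shows "x \<bullet>c (a \<cdot>\<^sub>v y) = cnj a * (x \<bullet>c y)"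
  using assms by (simp add: conjugate_smult_vec scalar_prod_smult_distrib[of _ n])

lemma cscalar_prod_swap:
  fixes x y :: "complex vec"
  assumes "x \<in> carrier_vec n" "y \<in> carrier_vec n"
  shows "y \<bullet>c x = cnj (x \<bullet>c y)"
  using assms by (simp add: scalar_prod_def mult.commute)

lemma cscalar_prod_self_eq:
  "x \<in> carrier_vec n \<Longrightarrow> x \<bullet>c x = complex_of_real (\<Sum>i = 0..<n. cmod (x $ i) ^ 2)"
  by (simp add: scalar_prod_def complex_norm_square del: of_real_power)

lemma exists_real_normalizer:
  fixes x :: "complex vec"
  assumes "x \<in> carrier_vec n" "x \<noteq> 0\<^sub>v n"
  shows "\<exists>r. (complex_of_real r \<cdot>\<^sub>v x) \<bullet>c (complex_of_real r \<cdot>\<^sub>v x) = 1"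
proof -
  define s where "s = Re (x \<bullet>c x)"
  have "0 \<le> x \<bullet>c x" "x \<bullet>c x \<noteq> 0"
    using assms by auto
  then have xx: "x \<bullet>c x = complex_of_real s" and s: "s > 0"
    by (auto simp: s_def less_eq_complex_def complex_eq_iff)
  have "(complex_of_real (1 / sqrt s) \<cdot>\<^sub>v x) \<bullet>c (complex_of_real (1 / sqrt s) \<cdot>\<^sub>v x) = 1"
    using assms s by (simp add: cscalar_prod_smult_left[of _ n] cscalar_prod_smult_right[of _ n] xx
        flip: of_real_mult)
  then show ?thesis ..
qed

lemma cscalar_prod_project_out:
  fixes x w :: "complex vec"
  assumes "x \<in> carrier_vec n" "w \<in> carrier_vec n" "w \<bullet>c w \<noteq> 0"
  shows "(x - ((x \<bullet>c w) / (w \<bullet>c w)) \<cdot>\<^sub>v w) \<bullet>c w = 0"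
  using assms by (simp add: cscalar_prod_diff_left[of _ n] cscalar_prod_smult_left[of _ n])

section \<open>Adjoints and unitary matrices\<close>

lemma adj_carrier [simp]: "A \<in> carrier_mat n m \<Longrightarrow> adj A \<in> carrier_mat m n"
  by (auto simp: adj_def)

lemma dim_adj [simp]: "dim_row (adj A) = dim_col A" "dim_col (adj A) = dim_row A"
  by (simp_all add: adj_def)

lemma adj_adj: "A \<in> carrier_mat n m \<Longrightarrow> adj (adj A) = A"
  by (rule eq_matI) (auto simp: adj_def)

lemma adj_mult:
  assumes "A \<in> carrier_mat n m" "B \<in> carrier_mat m k"
  shows "adj (A * B) = adj B * adj A"
  using assms by (intro eq_matI) (auto simp: adj_def scalar_prod_def mult.commute)

lemma cscalar_prod_mult_vec_adj:
  assumes A: "A \<in> carrier_mat n m" and x: "x \<in> carrier_vec m" and y: "y \<in> carrier_vec n"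
  shows "(A *\<^sub>v x) \<bullet>c y = x \<bullet>c (adj A *\<^sub>v y)"
proof -
  have "(A *\<^sub>v x) \<bullet>c y = (\<Sum>i<n. \<Sum>k<m. A $$ (i, k) * x $ k * cnj (y $ i))"
    using A x y by (simp add: scalar_prod_def sum_distrib_right atLeast0LessThan)
  also have "\<dots> = (\<Sum>k<m. \<Sum>i<n. A $$ (i, k) * x $ k * cnj (y $ i))"
    by (rule sum.swap)
  also have "\<dots> = x \<bullet>c (adj A *\<^sub>v y)"
    using A x y by (simp add: adj_def scalar_prod_def sum_distrib_left atLeast0LessThan mult_ac)
  finally show ?thesis .
qed

lemma adj_mult_mult_index:
  assumes "L1 \<in> carrier_mat n n" "U \<in> carrier_mat n n" "L2 \<in> carrier_mat n n" "i < n" "j < n"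
  shows "(adj L1 * U * L2) $$ (i, j) = (U *\<^sub>v col L2 j) \<bullet>c col L1 i"
proof -
  have "(adj L1 * U * L2) $$ (i, j) = (adj L1 * (U * L2)) $$ (i, j)"
    using assms by (simp add: assoc_mult_mat[of _ n n _ n _ n])
  also have "\<dots> = col (U * L2) j \<bullet>c col L1 i"
    using assms by (simp add: adj_def scalar_prod_def mult.commute)
  finally show ?thesis
    using assms by (simp add: mult_mat_vec_def)
qed

lemma adj_four_block_mat:
  assumes "A \<in> carrier_mat n1 n1" "D \<in> carrier_mat n2 n2"
  shows "adj (four_block_mat A (0\<^sub>m n1 n2) (0\<^sub>m n2 n1) D) =
    four_block_mat (adj A) (0\<^sub>m n1 n2) (0\<^sub>m n2 n1) (adj D)"
  using assms by (intro eq_matI) (auto simp: adj_def)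

lemma unitary_carrier: "unitary n U \<Longrightarrow> U \<in> carrier_mat n n"
  by (simp add: unitary_def)

lemma unitary_adj: "unitary n U \<Longrightarrow> unitary n (adj U)"
  by (auto simp: unitary_def adj_adj)

lemma unitary_if_adj_mult:
  assumes "A \<in> carrier_mat n n" "adj A * A = 1\<^sub>m n"
  shows "unitary n A"
  using assms mat_mult_left_right_inverse[of "adj A" n A] by (simp add: unitary_def)

lemma unitary_mult:
  assumes A: "unitary n A" and B: "unitary n B"
  shows "unitary n (A * B)"
proof -
  have Ac: "A \<in> carrier_mat n n" and Bc: "B \<in> carrier_mat n n"
    using A B by (simp_all add: unitary_carrier)
  have "adj (A * B) * (A * B) = adj B * ((adj A * A) * B)"
    using Ac Bc by (simp add: adj_mult[OF Ac Bc] assoc_mult_mat[of _ n n _ n _ n])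
  then show ?thesis
    using A B Ac Bc by (intro unitary_if_adj_mult) (simp_all add: unitary_def)
qed

lemma unitary_adj_mult_cancel:
  assumes "unitary n U" "x \<in> carrier_vec n"
  shows "adj U *\<^sub>v (U *\<^sub>v x) = x" "U *\<^sub>v (adj U *\<^sub>v x) = x"
  using assms by (auto simp: unitary_def assoc_mult_mat_vec[symmetric, of _ n n _ n])

lemma unitary_adj_mult_vec_eq:
  assumes U: "unitary n U" and "x \<in> carrier_vec n" "y \<in> carrier_vec n" "U *\<^sub>v x = c \<cdot>\<^sub>v y" "c \<noteq> 0"
  shows "adj U *\<^sub>v y = (1 / c) \<cdot>\<^sub>v x"
proof -
  have "c \<cdot>\<^sub>v (adj U *\<^sub>v y) = x"
    using assms unitary_carrier[OF U]
    by (metis mult_mat_vec[OF adj_carrier] unitary_adj_mult_cancel(1))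
  then show ?thesis
    using assms(5) by (auto simp: smult_smult_assoc)
qed

lemma unitary_conj_cancel:
  assumes L1: "unitary n L1" and L2: "unitary n L2" and U: "U \<in> carrier_mat n n"
  shows "L1 * (adj L1 * U * L2) * adj L2 = U"
proof -
  have L1c: "L1 \<in> carrier_mat n n" and L2c: "L2 \<in> carrier_mat n n"
    using L1 L2 by (simp_all add: unitary_carrier)
  have "L1 * (adj L1 * U * L2) * adj L2 = (L1 * adj L1) * U * (L2 * adj L2)"
    using L1c L2c U by (simp add: assoc_mult_mat[of _ n n _ n _ n] mult_carrier_mat[of _ n n _ n])
  then show ?thesis
    using L1 L2 U by (simp add: unitary_def)
qed

lemma unitary_cscalar_prod:
  assumes U: "unitary n U" and x: "x \<in> carrier_vec n" and y: "y \<in> carrier_vec n"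
  shows "(U *\<^sub>v x) \<bullet>c (U *\<^sub>v y) = x \<bullet>c y"
proof -
  have "(U *\<^sub>v x) \<bullet>c (U *\<^sub>v y) = x \<bullet>c (adj U *\<^sub>v (U *\<^sub>v y))"
    using U x y by (simp add: unitary_carrier cscalar_prod_mult_vec_adj[of _ n n]
        mult_mat_vec_carrier[of _ n n])
  then show ?thesis
    using assms by (simp add: unitary_adj_mult_cancel)
qed

lemma unitary_col_cscalar_prod:
  assumes U: "unitary n U" and "a < n" "b < n"
  shows "col U a \<bullet>c col U b = (if a = b then 1 else 0)"
proof -
  have Uc: "U \<in> carrier_mat n n"
    using U by (rule unitary_carrier)
  have "col U a \<bullet>c col U b = (adj U * U) $$ (b, a)"
    using Uc assms by (simp add: adj_def scalar_prod_def mult.commute)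
  then show ?thesis
    using U assms by (auto simp: unitary_def)
qed

lemma mult_mat_vec_unit:
  "(A :: 'a :: semiring_1 mat) \<in> carrier_mat n m \<Longrightarrow> j < m \<Longrightarrow> A *\<^sub>v unit_vec m j = col A j"
  by (rule eq_vecI) auto

lemma isometry_imp_unitary:
  assumes A: "A \<in> carrier_mat n n"
    and iso: "\<And>x y. x \<in> carrier_vec n \<Longrightarrow> y \<in> carrier_vec n \<Longrightarrow> (A *\<^sub>v x) \<bullet>c (A *\<^sub>v y) = x \<bullet>c y"
  shows "unitary n A"
proof -
  have "adj A * A = 1\<^sub>m n"
  proof (rule eq_matI)
    fix i j assume "i < dim_row (1\<^sub>m n :: complex mat)" "j < dim_col (1\<^sub>m n :: complex mat)"
    then have ij: "i < n" "j < n"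
      by auto
    have "(adj A * A) $$ (i, j) = col A j \<bullet>c col A i"
      using A ij by (simp add: adj_def scalar_prod_def mult.commute)
    also have "\<dots> = (A *\<^sub>v unit_vec n j) \<bullet>c (A *\<^sub>v unit_vec n i)"
      using A ij by (simp add: mult_mat_vec_unit)
    also have "\<dots> = unit_vec n j \<bullet>c unit_vec n i"
      by (rule iso) auto
    also have "\<dots> = (1\<^sub>m n :: complex mat) $$ (i, j)"
      using ij by simp
    finally show "(adj A * A) $$ (i, j) = (1\<^sub>m n :: complex mat) $$ (i, j)" .
  qed (use A in simp_all)
  then show ?thesis
    using A by (rule unitary_if_adj_mult[rotated])
qed

lemma unitary_block_diagonal:
  assumes W: "unitary (n1 + n2) W"
    and zero: "\<And>i j. i < n1 + n2 \<Longrightarrow> j < n1 + n2 \<Longrightarrow> (i < n1) \<noteq> (j < n1) \<Longrightarrow> W $$ (i, j) = 0"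
  shows "\<exists>A D. unitary n1 A \<and> unitary n2 D \<and> W = four_block_mat A (0\<^sub>m n1 n2) (0\<^sub>m n2 n1) D"
proof -
  define A where "A = mat n1 n1 (\<lambda>(i, j). W $$ (i, j))"
  define D where "D = mat n2 n2 (\<lambda>(i, j). W $$ (n1 + i, n1 + j))"
  have Ac: "A \<in> carrier_mat n1 n1" and Dc: "D \<in> carrier_mat n2 n2"
    by (simp_all add: A_def D_def)
  have WAD: "W = four_block_mat A (0\<^sub>m n1 n2) (0\<^sub>m n2 n1) D"
    using W zero by (intro eq_matI) (auto simp: A_def D_def unitary_def)
  have AA: "adj A * A \<in> carrier_mat n1 n1" and DD: "adj D * D \<in> carrier_mat n2 n2"
    using Ac Dc by auto
  have "four_block_mat (adj A * A) (0\<^sub>m n1 n2) (0\<^sub>m n2 n1) (adj D * D) = adj W * W"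
    using Ac Dc AA DD
    by (simp add: WAD adj_four_block_mat mult_four_block_mat[OF adj_carrier[OF Ac] zero_carrier_mat
        zero_carrier_mat adj_carrier[OF Dc] Ac zero_carrier_mat zero_carrier_mat Dc])
  also have "\<dots> = four_block_mat (1\<^sub>m n1) (0\<^sub>m n1 n2) (0\<^sub>m n2 n1) (1\<^sub>m n2)"
    using W by (simp add: unitary_def)
  finally have blocks: "four_block_mat (adj A * A) (0\<^sub>m n1 n2) (0\<^sub>m n2 n1) (adj D * D)
      = four_block_mat (1\<^sub>m n1) (0\<^sub>m n1 n2) (0\<^sub>m n2 n1) (1\<^sub>m n2)" .
  have "adj A * A = 1\<^sub>m n1"
  proof (rule eq_matI)
    fix i j assume "i < dim_row (1\<^sub>m n1 :: complex mat)" "j < dim_col (1\<^sub>m n1 :: complex mat)"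
    then show "(adj A * A) $$ (i, j) = (1\<^sub>m n1 :: complex mat) $$ (i, j)"
      using arg_cong[OF blocks, of "\<lambda>M. M $$ (i, j)"] AA DD
      by (simp add: carrier_matD[OF Ac] carrier_matD[OF Dc])
  qed (use AA in auto)
  moreover have "adj D * D = 1\<^sub>m n2"
  proof (rule eq_matI)
    fix i j assume "i < dim_row (1\<^sub>m n2 :: complex mat)" "j < dim_col (1\<^sub>m n2 :: complex mat)"
    then show "(adj D * D) $$ (i, j) = (1\<^sub>m n2 :: complex mat) $$ (i, j)"
      using arg_cong[OF blocks, of "\<lambda>M. M $$ (n1 + i, n1 + j)"] AA DD
      by (simp add: carrier_matD[OF Ac] carrier_matD[OF Dc])
  qed (use DD in auto)
  ultimately show ?thesis
    using Ac Dc WAD unitary_if_adj_mult by blast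
qed

section \<open>Eigenvectors of unitary matrices\<close>

lemma unitary_eigenvalue_norm:
  assumes A: "unitary n A" and v: "v \<in> carrier_vec n" "v \<noteq> 0\<^sub>v n" and e: "A *\<^sub>v v = l \<cdot>\<^sub>v v"
  shows "l * cnj l = 1"
proof -
  have "l * cnj l * (v \<bullet>c v) = v \<bullet>c v"
    using unitary_cscalar_prod[OF A v(1) v(1)] v e
    by (simp add: cscalar_prod_smult_left[of _ n] cscalar_prod_smult_right[of _ n] mult_ac)
  moreover have "v \<bullet>c v \<noteq> 0"
    using v by simp
  ultimately show ?thesis
    by (simp add: mult.commute)
qed

lemma unitary_eigenvectors_orthogonal:
  assumes A: "unitary n A" and v: "v \<in> carrier_vec n" and w: "w \<in> carrier_vec n" "w \<noteq> 0\<^sub>v n"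
    and ev: "A *\<^sub>v v = l \<cdot>\<^sub>v v" and ew: "A *\<^sub>v w = m \<cdot>\<^sub>v w" and "l \<noteq> m"
  shows "v \<bullet>c w = 0"
proof (rule ccontr)
  assume vw: "v \<bullet>c w \<noteq> 0"
  have "l * cnj m * (v \<bullet>c w) = v \<bullet>c w"
    using unitary_cscalar_prod[OF A v w(1)] v w ev ew
    by (simp add: cscalar_prod_smult_left[of _ n] cscalar_prod_smult_right[of _ n] mult_ac)
  then have "l * cnj m = 1"
    using vw by simp
  then have "l * (m * cnj m) = m"
    by (metis mult.assoc mult.commute mult_1)
  then show False
    using unitary_eigenvalue_norm[OF A w ew] \<open>l \<noteq> m\<close> by (simp add: mult.commute)
qed

lemma eigenvector_diff:
  fixes A :: "complex mat"
  assumes "A \<in> carrier_mat n n" "x \<in> carrier_vec n" "w \<in> carrier_vec n"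
    and "A *\<^sub>v x = m \<cdot>\<^sub>v x" "A *\<^sub>v w = l \<cdot>\<^sub>v w" "c * l = c * m"
  shows "A *\<^sub>v (x - c \<cdot>\<^sub>v w) = m \<cdot>\<^sub>v (x - c \<cdot>\<^sub>v w)"
proof -
  have cml: "c * (l * y) = c * (m * y)" for y
    using assms(6) by (metis mult.assoc)
  have "A *\<^sub>v (x - c \<cdot>\<^sub>v w) = m \<cdot>\<^sub>v x - c \<cdot>\<^sub>v (l \<cdot>\<^sub>v w)"
    using assms by (simp add: mult_minus_distrib_mat_vec[of A n n] mult_mat_vec[of A n n])
  then show ?thesis
    using assms(2,3) by (intro eq_vecI) (auto simp: cml algebra_simps)
qed

lemma exists_upper_triangular_similar:
  fixes A :: "complex mat"
  assumes A: "A \<in> carrier_mat n n"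
  shows "\<exists>B P Q. B \<in> carrier_mat n n \<and> P \<in> carrier_mat n n \<and> Q \<in> carrier_mat n n \<and>
    upper_triangular B \<and> Q * P = 1\<^sub>m n \<and> A * P = P * B"
proof -
  obtain es where "char_poly A = (\<Prod>a\<leftarrow>es. [:- a, 1:])"
    using char_poly_factorized[OF A] by blast
  then obtain B where B: "B \<in> carrier_mat n n" and ut: "upper_triangular B" and "similar_mat A B"
    using schur_decomposition_exists[OF A] by blast
  then obtain n' P Q where PQ: "{A, B, P, Q} \<subseteq> carrier_mat n' n'"
    and QP: "Q * P = 1\<^sub>m n'" and APBQ: "A = P * B * Q"
    using similar_matD by blast
  moreover have "n' = n"
    using PQ A by auto
  ultimately have P: "P \<in> carrier_mat n n" and Q: "Q \<in> carrier_mat n n" and "Q * P = 1\<^sub>m n"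
    by auto
  moreover have "A * P = P * B"
    using P B Q \<open>Q * P = 1\<^sub>m n\<close> by (simp add: APBQ assoc_mult_mat[of _ n n _ n _ n])
  ultimately show ?thesis
    using B ut by blast
qed

lemma exists_eigenvector_and_invariant_plane:
  fixes A :: "complex mat"
  assumes A: "A \<in> carrier_mat n n" and n: "2 \<le> n"
  shows "\<exists>p0 p1 b00 b01 b11. p0 \<in> carrier_vec n \<and> p1 \<in> carrier_vec n \<and> p0 \<noteq> 0\<^sub>v n \<and>
    (\<forall>c. p1 \<noteq> c \<cdot>\<^sub>v p0) \<and> A *\<^sub>v p0 = b00 \<cdot>\<^sub>v p0 \<and> A *\<^sub>v p1 = b01 \<cdot>\<^sub>v p0 + b11 \<cdot>\<^sub>v p1"
proof -
  obtain B P Q where B: "B \<in> carrier_mat n n" and P: "P \<in> carrier_mat n n"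
    and Q: "Q \<in> carrier_mat n n" and ut: "upper_triangular B"
    and QP: "Q * P = 1\<^sub>m n" and AP: "A * P = P * B"
    using exists_upper_triangular_similar[OF A] by blast
  have A_col: "A *\<^sub>v col P j = P *\<^sub>v col B j" if "j < n" for j
    using A P B that by (simp flip: col_mult2 add: AP)
  have B0: "col B 0 = B $$ (0, 0) \<cdot>\<^sub>v unit_vec n 0"
    using B ut n by (intro eq_vecI) (auto simp: upper_triangularD)
  have B1: "col B 1 = B $$ (0, 1) \<cdot>\<^sub>v unit_vec n 0 + B $$ (1, 1) \<cdot>\<^sub>v unit_vec n 1"
    using B ut n by (intro eq_vecI) (auto simp: upper_triangularD)
  define p0 where "p0 = col P 0"
  define p1 where "p1 = col P 1"
  have p: "p0 \<in> carrier_vec n" "p1 \<in> carrier_vec n"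
    using P by (auto simp: p0_def p1_def intro: carrier_vecI)
  have Ap0: "A *\<^sub>v p0 = B $$ (0, 0) \<cdot>\<^sub>v p0"
    using A_col[of 0] P n by (simp add: p0_def B0 mult_mat_vec mult_mat_vec_unit)
  have "A *\<^sub>v p1 = P *\<^sub>v col B 1"
    using A_col[of 1] n by (simp add: p1_def)
  also have "\<dots> = B $$ (0, 1) \<cdot>\<^sub>v (P *\<^sub>v unit_vec n 0) + B $$ (1, 1) \<cdot>\<^sub>v (P *\<^sub>v unit_vec n 1)"
    unfolding B1 using P by (simp add: mult_add_distrib_mat_vec[OF P] mult_mat_vec[OF P])
  also have "\<dots> = B $$ (0, 1) \<cdot>\<^sub>v p0 + B $$ (1, 1) \<cdot>\<^sub>v p1"
    using P n by (simp add: mult_mat_vec_unit p0_def p1_def)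
  finally have Ap1: "A *\<^sub>v p1 = B $$ (0, 1) \<cdot>\<^sub>v p0 + B $$ (1, 1) \<cdot>\<^sub>v p1" .
  have "row Q 0 \<bullet> p0 = 1" "row Q 1 \<bullet> p0 = 0" "row Q 1 \<bullet> p1 = 1"
    using arg_cong[OF QP, of "\<lambda>M. M $$ (0, 0)"] arg_cong[OF QP, of "\<lambda>M. M $$ (1, 0)"]
      arg_cong[OF QP, of "\<lambda>M. M $$ (1, 1)"] P Q n by (simp_all add: p0_def p1_def)
  then have "p0 \<noteq> 0\<^sub>v n" "\<forall>c. p1 \<noteq> c \<cdot>\<^sub>v p0"
    using Q p by auto
  then show ?thesis
    using p Ap0 Ap1 by blast
qed

lemma unitary_two_orthogonal_eigenvectors:
  assumes A: "unitary n A" and n: "2 \<le> n"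
  shows "\<exists>v1 v2 l1 l2. v1 \<in> carrier_vec n \<and> v2 \<in> carrier_vec n \<and> v1 \<noteq> 0\<^sub>v n \<and> v2 \<noteq> 0\<^sub>v n \<and>
    A *\<^sub>v v1 = l1 \<cdot>\<^sub>v v1 \<and> A *\<^sub>v v2 = l2 \<cdot>\<^sub>v v2 \<and> v2 \<bullet>c v1 = 0"
proof -
  have Ac: "A \<in> carrier_mat n n"
    using A by (rule unitary_carrier)
  obtain p0 p1 b00 b01 b11 where p: "p0 \<in> carrier_vec n" "p1 \<in> carrier_vec n" "p0 \<noteq> 0\<^sub>v n"
    and indep: "\<forall>c. p1 \<noteq> c \<cdot>\<^sub>v p0"
    and Ap0: "A *\<^sub>v p0 = b00 \<cdot>\<^sub>v p0" and Ap1: "A *\<^sub>v p1 = b01 \<cdot>\<^sub>v p0 + b11 \<cdot>\<^sub>v p1"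
    using exists_eigenvector_and_invariant_plane[OF Ac n] by blast
  have pp: "p0 \<bullet>c p0 \<noteq> 0"
    using p by simp
  \<comment> \<open>Gram-Schmidt on the Schur vectors; unitarity of A then kills the p0-component d of A q.\<close>
  define c where "c = (p1 \<bullet>c p0) / (p0 \<bullet>c p0)"
  define q where "q = p1 - c \<cdot>\<^sub>v p0"
  define d where "d = b01 + c * b11 - c * b00"
  have q: "q \<in> carrier_vec n" "q \<noteq> 0\<^sub>v n"
    using p indep by (auto simp: q_def diff_vec_eq_0_iff)
  have qp: "q \<bullet>c p0 = 0"
    unfolding q_def c_def by (rule cscalar_prod_project_out[OF p(2,1) pp])
  have Aq: "A *\<^sub>v q = b11 \<cdot>\<^sub>v q + d \<cdot>\<^sub>v p0"
    using p Ac by (intro eq_vecI)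
      (auto simp: q_def d_def mult_minus_distrib_mat_vec[OF Ac] mult_mat_vec[OF Ac] Ap0 Ap1
        algebra_simps)
  have "cnj b00 * (d * (p0 \<bullet>c p0)) = (A *\<^sub>v q) \<bullet>c (A *\<^sub>v p0)"
    using p q qp by (simp add: Aq Ap0 cscalar_prod_add_left[of _ n] cscalar_prod_smult_left[of _ n]
        cscalar_prod_smult_right[of _ n])
  also have "\<dots> = 0"
    using unitary_cscalar_prod[OF A q(1) p(1)] qp by simp
  finally have "d = 0"
    using pp unitary_eigenvalue_norm[OF A p(1,3) Ap0] by auto
  then have "A *\<^sub>v q = b11 \<cdot>\<^sub>v q"
    using q p by (intro eq_vecI) (auto simp: Aq)
  then show ?thesis
    using p q qp Ap0 by blast
qed

lemma unitary_eigenvector_orthogonal_to_eigenvector: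
  assumes A: "unitary n A" and n: "2 \<le> n"
    and w: "w \<in> carrier_vec n" "w \<noteq> 0\<^sub>v n" and Aw: "A *\<^sub>v w = l \<cdot>\<^sub>v w"
  shows "\<exists>g m. g \<in> carrier_vec n \<and> g \<noteq> 0\<^sub>v n \<and> g \<bullet>c w = 0 \<and> A *\<^sub>v g = m \<cdot>\<^sub>v g"
proof -
  have ww: "w \<bullet>c w \<noteq> 0"
    using w by simp
  define proj where "proj v = v - ((v \<bullet>c w) / (w \<bullet>c w)) \<cdot>\<^sub>v w" for v
  have proj: "proj v \<in> carrier_vec n \<and> proj v \<bullet>c w = 0 \<and> A *\<^sub>v proj v = m \<cdot>\<^sub>v proj v"
    if v: "v \<in> carrier_vec n" and Av: "A *\<^sub>v v = m \<cdot>\<^sub>v v" for v m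
  proof -
    have "v \<bullet>c w = 0" if "m \<noteq> l"
      using unitary_eigenvectors_orthogonal[OF A v w Av Aw that] .
    then have "(v \<bullet>c w) / (w \<bullet>c w) * l = (v \<bullet>c w) / (w \<bullet>c w) * m"
      by (cases "m = l") auto
    then show ?thesis
      unfolding proj_def using v w ww unitary_carrier[OF A]
      by (auto simp: cscalar_prod_project_out eigenvector_diff[OF _ v w(1) Av Aw])
  qed
  obtain v1 v2 l1 l2 where v: "v1 \<in> carrier_vec n" "v2 \<in> carrier_vec n" "v1 \<noteq> 0\<^sub>v n" "v2 \<noteq> 0\<^sub>v n"
    and Av: "A *\<^sub>v v1 = l1 \<cdot>\<^sub>v v1" "A *\<^sub>v v2 = l2 \<cdot>\<^sub>v v2" and v21: "v2 \<bullet>c v1 = 0"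
    using unitary_two_orthogonal_eigenvectors[OF A n] by blast
  have "proj v1 \<noteq> 0\<^sub>v n \<or> proj v2 \<noteq> 0\<^sub>v n"
  proof (rule ccontr)
    assume "\<not> ?thesis"
    then obtain a b where "v1 = a \<cdot>\<^sub>v w" "v2 = b \<cdot>\<^sub>v w"
      unfolding proj_def using v w by (auto simp: diff_vec_eq_0_iff)
    moreover from this have "a = 0 \<or> b = 0"
      using v21 w by (auto simp: cscalar_prod_smult_left[of _ n] cscalar_prod_smult_right[of _ n])
    ultimately show False
      using v by auto
  qed
  then show ?thesis
    using proj[OF v(1) Av(1)] proj[OF v(2) Av(2)] by blast
qed

section \<open>Two-qubit gates\<close>

lemma kron2_carrier [simp]: "kron2 A B \<in> carrier_mat 4 4"
  and dim_kron2 [simp]: "dim_row (kron2 A B) = 4" "dim_col (kron2 A B) = 4"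
  by (simp_all add: kron2_def)

lemma kron2_index:
  "i < 4 \<Longrightarrow> j < 4 \<Longrightarrow> kron2 A B $$ (i, j) = A $$ (i div 2, j div 2) * B $$ (i mod 2, j mod 2)"
  by (simp add: kron2_def)

lemma kron2_mult:
  assumes "A \<in> carrier_mat 2 2" "B \<in> carrier_mat 2 2" "C \<in> carrier_mat 2 2" "D \<in> carrier_mat 2 2"
  shows "kron2 A B * kron2 C D = kron2 (A * C) (B * D)"
proof (rule eq_matI)
  fix i j assume "i < dim_row (kron2 (A * C) (B * D))" "j < dim_col (kron2 (A * C) (B * D))"
  then have "i < 4" "j < 4" "i div 2 < 2" "j div 2 < 2"
    by auto
  then show "(kron2 A B * kron2 C D) $$ (i, j) = kron2 (A * C) (B * D) $$ (i, j)"
    using assms by (simp add: kron2_def scalar_prod_def sum_atLeast0LessThan_4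
        sum_atLeast0LessThan_2 ring_distribs mult_ac)
qed auto

lemma adj_kron2:
  assumes "A \<in> carrier_mat 2 2" "B \<in> carrier_mat 2 2"
  shows "adj (kron2 A B) = kron2 (adj A) (adj B)"
proof (rule eq_matI)
  fix i j assume "i < dim_row (kron2 (adj A) (adj B))" "j < dim_col (kron2 (adj A) (adj B))"
  then have "i < 4" "j < 4" "i div 2 < 2" "j div 2 < 2"
    by auto
  then show "adj (kron2 A B) $$ (i, j) = kron2 (adj A) (adj B) $$ (i, j)"
    using assms by (simp add: adj_def kron2_def)
qed auto

lemma kron2_one: "kron2 (1\<^sub>m 2) (1\<^sub>m 2) = 1\<^sub>m 4"
  by (rule eq_matI) (auto simp: kron2_def dest!: less_4_cases_nat)

lemma unitary_kron2:
  assumes A: "unitary 2 A" and B: "unitary 2 B"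
  shows "unitary 4 (kron2 A B)"
proof -
  have Ac: "A \<in> carrier_mat 2 2" and Bc: "B \<in> carrier_mat 2 2"
    using A B by (simp_all add: unitary_carrier)
  have "adj (kron2 A B) * kron2 A B = kron2 (adj A * A) (adj B * B)"
    using Ac Bc by (simp add: adj_kron2 kron2_mult)
  moreover have "kron2 A B * adj (kron2 A B) = kron2 (A * adj A) (B * adj B)"
    using Ac Bc by (simp add: adj_kron2 kron2_mult)
  ultimately show ?thesis
    using A B by (simp add: unitary_def kron2_one)
qed

definition su2 :: "complex \<Rightarrow> complex \<Rightarrow> complex mat" where
  "su2 a0 a1 = mat_of_rows_list 2 [[a0, - cnj a1], [a1, cnj a0]]"

lemma dim_su2 [simp]: "dim_row (su2 a0 a1) = 2" "dim_col (su2 a0 a1) = 2"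
  by (simp_all add: su2_def mat_of_rows_list_def)

lemma su2_carrier [simp]: "su2 a0 a1 \<in> carrier_mat 2 2"
  by (simp add: carrier_matI)

lemma unitary_su2:
  assumes "cmod a0 ^ 2 + cmod a1 ^ 2 = 1"
  shows "unitary 2 (su2 a0 a1)"
proof (rule unitary_if_adj_mult)
  have "complex_of_real (cmod a0 ^ 2 + cmod a1 ^ 2) = 1"
    using assms by simp
  then have "a0 * cnj a0 + a1 * cnj a1 = 1"
    by (simp only: of_real_add complex_norm_square)
  then show "adj (su2 a0 a1) * su2 a0 a1 = 1\<^sub>m 2"
    by (intro eq_matI)
      (auto simp: adj_def scalar_prod_def sum_atLeast0LessThan_2 su2_def mat_of_rows_list_def
        algebra_simps dest!: less_2_cases_nat)
qed simp

lemma kron2_one_left: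
  "B \<in> carrier_mat 2 2 \<Longrightarrow> kron2 (1\<^sub>m 2) B = four_block_mat B (0\<^sub>m 2 2) (0\<^sub>m 2 2) B"
  by (rule eq_matI) (auto simp: kron2_def dest!: less_4_cases_nat)

lemma ctrl_carrier: "U \<in> carrier_mat 2 2 \<Longrightarrow> ctrl U \<in> carrier_mat 4 4"
  using four_block_carrier_mat[of "1\<^sub>m 2" 2 2 U 2 2] by (simp add: ctrl_def)

lemma ctrl_mult_kron2_one:
  assumes "A \<in> carrier_mat 2 2" "B \<in> carrier_mat 2 2"
  shows "ctrl A * kron2 (1\<^sub>m 2) B = four_block_mat B (0\<^sub>m 2 2) (0\<^sub>m 2 2) (A * B)"
  using assms by (simp add: ctrl_def kron2_one_left mult_four_block_mat[of _ 2 2 _ 2 _ 2 _ _ 2 _ 2])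

lemma botCNOT_carrier [simp]: "botCNOT \<in> carrier_mat 4 4"
  and dim_botCNOT [simp]: "dim_row botCNOT = 4" "dim_col botCNOT = 4"
  by (simp_all add: botCNOT_def mat_of_rows_list_def carrier_matI)

lemma botCNOT_index:
  assumes "i < 4" "j < 4"
  shows "botCNOT $$ (i, j) = (if j = Transposition.transpose 1 3 i then 1 else 0)"
  using less_4_cases_nat[OF assms(1)] less_4_cases_nat[OF assms(2)]
  by (elim disjE) (simp_all add: botCNOT_def mat_of_rows_list_def Transposition.transpose_def)

lemma botCNOT_mult_index:
  assumes M: "M \<in> carrier_mat 4 n" and i: "i < 4" and j: "j < n"
  shows "(botCNOT * M) $$ (i, j) = M $$ (Transposition.transpose 1 3 i, j)"
  using less_4_cases_nat[OF i] M j
  by (elim disjE) (simp_all add: scalar_prod_def sum_atLeast0LessThan_4 botCNOT_index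
      Transposition.transpose_def)

lemma mult_botCNOT_index:
  assumes M: "M \<in> carrier_mat n 4" and i: "i < n" and j: "j < 4"
  shows "(M * botCNOT) $$ (i, j) = M $$ (i, Transposition.transpose 1 3 j)"
  using less_4_cases_nat[OF j] M i
  by (elim disjE) (simp_all add: scalar_prod_def sum_atLeast0LessThan_4 botCNOT_index
      Transposition.transpose_def)

lemma botCNOT_square: "botCNOT * botCNOT = 1\<^sub>m 4"
proof (rule eq_matI)
  fix i j assume "i < dim_row (1\<^sub>m 4 :: complex mat)" "j < dim_col (1\<^sub>m 4 :: complex mat)"
  then show "(botCNOT * botCNOT) $$ (i, j) = (1\<^sub>m 4 :: complex mat) $$ (i, j)"
    by (auto simp: botCNOT_mult_index[OF botCNOT_carrier] botCNOT_index Transposition.transpose_def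
        simp del: index_mult_mat)
qed simp_all

lemma unitary_botCNOT: "unitary 4 botCNOT"
proof -
  have "adj botCNOT = botCNOT"
    by (rule eq_matI) (auto simp: adj_def botCNOT_index Transposition.transpose_def)
  then show ?thesis
    by (simp add: unitary_def botCNOT_square)
qed

lemma botCNOT_block_factorization:
  assumes V: "unitary 4 V"
    and zero: "\<And>i j. i < 4 \<Longrightarrow> j < 4 \<Longrightarrow> (i \<in> {0, 3}) \<noteq> (j \<in> {0, 3}) \<Longrightarrow> V $$ (i, j) = 0"
  shows "\<exists>U3 U4. unitary 2 U3 \<and> unitary 2 U4 \<and> V = botCNOT * ctrl U3 * kron2 (1\<^sub>m 2) U4 * botCNOT"
proof -
  have Vc: "V \<in> carrier_mat 4 4"
    using V by (rule unitary_carrier)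
  define W where "W = botCNOT * V * botCNOT"
  have "unitary (2 + 2) W"
    using V by (simp add: W_def unitary_mult unitary_botCNOT)
  moreover have "W $$ (i, j) = 0" if ij: "i < 2 + 2" "j < 2 + 2" "(i < 2) \<noteq> (j < 2)" for i j
  proof -
    have swap: "Transposition.transpose 1 3 k < 4" if "k < 4" for k :: nat
      using that by (auto simp: Transposition.transpose_def)
    have "W $$ (i, j) = (botCNOT * V) $$ (i, Transposition.transpose 1 3 j)"
      unfolding W_def using ij Vc by (intro mult_botCNOT_index) auto
    also have "\<dots> = V $$ (Transposition.transpose 1 3 i, Transposition.transpose 1 3 j)"
      using ij swap by (intro botCNOT_mult_index[OF Vc]) auto
    also have "\<dots> = 0"
      using ij by (intro zero) (auto simp: Transposition.transpose_def)
    finally show ?thesis .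
  qed
  ultimately obtain A D where A: "unitary 2 A" and D: "unitary 2 D"
    and WAD: "W = four_block_mat A (0\<^sub>m 2 2) (0\<^sub>m 2 2) D"
    using unitary_block_diagonal by blast
  have Ac: "A \<in> carrier_mat 2 2" and Dc: "D \<in> carrier_mat 2 2"
    using A D by (simp_all add: unitary_carrier)
  define U3 where "U3 = D * adj A"
  have U3: "unitary 2 U3"
    unfolding U3_def using D A by (intro unitary_mult unitary_adj)
  have "U3 * A = D * (adj A * A)"
    using Ac Dc by (simp add: U3_def assoc_mult_mat[of _ 2 2 _ 2 _ 2])
  then have "ctrl U3 * kron2 (1\<^sub>m 2) A = W"
    using A Ac Dc unitary_carrier[OF U3] by (simp add: WAD ctrl_mult_kron2_one unitary_def)
  moreover have "botCNOT * W * botCNOT = (botCNOT * botCNOT) * V * (botCNOT * botCNOT)"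
    using Vc by (simp add: W_def assoc_mult_mat[of _ 4 4 _ 4 _ 4] mult_carrier_mat[of _ 4 4 _ 4])
  then have "botCNOT * W * botCNOT = V"
    using Vc by (simp add: botCNOT_square)
  ultimately have "V = botCNOT * (ctrl U3 * kron2 (1\<^sub>m 2) A) * botCNOT"
    by simp
  then have "V = botCNOT * ctrl U3 * kron2 (1\<^sub>m 2) A * botCNOT"
    using ctrl_carrier[OF unitary_carrier[OF U3]] by (simp add: assoc_mult_mat[of _ 4 4 _ 4 _ 4])
  then show ?thesis
    using U3 A by blast
qed

section \<open>The spin flip\<close>

text \<open>The spin flip x \<mapsto> (\<sigma>y \<otimes> \<sigma>y) conj x; its fixed vectors are the real span of a magic
  basis.\<close>

definition spin_flip :: "complex vec \<Rightarrow> complex vec" where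
  "spin_flip x = vec 4 (\<lambda>i. if i = 0 then - cnj (x $ 3) else if i = 1 then cnj (x $ 2)
                           else if i = 2 then cnj (x $ 1) else - cnj (x $ 0))"

lemma spin_flip_carrier [simp]: "spin_flip x \<in> carrier_vec 4"
  and dim_spin_flip [simp]: "dim_vec (spin_flip x) = 4"
  by (simp_all add: spin_flip_def)

lemma spin_flip_spin_flip [simp]: "x \<in> carrier_vec 4 \<Longrightarrow> spin_flip (spin_flip x) = x"
  by (rule eq_vecI) (auto simp: spin_flip_def dest!: less_4_cases_nat)

lemma spin_flip_add:
  "x \<in> carrier_vec 4 \<Longrightarrow> y \<in> carrier_vec 4 \<Longrightarrow> spin_flip (x + y) = spin_flip x + spin_flip y"
  by (rule eq_vecI) (auto simp: spin_flip_def)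

lemma spin_flip_smult: "x \<in> carrier_vec 4 \<Longrightarrow> spin_flip (a \<cdot>\<^sub>v x) = cnj a \<cdot>\<^sub>v spin_flip x"
  by (rule eq_vecI) (auto simp: spin_flip_def)

lemma spin_flip_cscalar_prod:
  "x \<in> carrier_vec 4 \<Longrightarrow> y \<in> carrier_vec 4 \<Longrightarrow> spin_flip x \<bullet>c spin_flip y = y \<bullet>c x"
  by (simp add: spin_flip_def scalar_prod_def sum_atLeast0LessThan_4 algebra_simps)

lemma spin_flip_fixed_components:
  assumes "spin_flip f = f"
  shows "f $ 3 = - cnj (f $ 0)" "f $ 2 = cnj (f $ 1)"
proof -
  have "spin_flip f $ 0 = f $ 0" "spin_flip f $ 1 = f $ 1"
    using assms by simp_all
  then show "f $ 3 = - cnj (f $ 0)" "f $ 2 = cnj (f $ 1)"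
    by (auto simp: spin_flip_def complex_eq_iff)
qed

text \<open>The matrix of x \<mapsto> J (U\<dagger> (J (U x))), that is (\<sigma>y \<otimes> \<sigma>y) (transpose U) (\<sigma>y \<otimes> \<sigma>y) U.\<close>

definition gamma :: "complex mat \<Rightarrow> complex mat" where
  "gamma U = mat 4 4 (\<lambda>(i, j). spin_flip (adj U *\<^sub>v spin_flip (U *\<^sub>v unit_vec 4 j)) $ i)"

lemma gamma_carrier [simp]: "gamma U \<in> carrier_mat 4 4"
  by (simp add: gamma_def)

lemma gamma_mult_vec:
  assumes "U \<in> carrier_mat 4 4" "x \<in> carrier_vec 4"
  shows "gamma U *\<^sub>v x = spin_flip (adj U *\<^sub>v spin_flip (U *\<^sub>v x))"
  using assms
  by (intro eq_vecI) (auto simp: gamma_def spin_flip_def adj_def scalar_prod_def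
      sum_atLeast0LessThan_4 algebra_simps dest!: less_4_cases_nat)

lemma gamma_cscalar_prod:
  assumes U: "unitary 4 U" and "x \<in> carrier_vec 4" "y \<in> carrier_vec 4"
  shows "(gamma U *\<^sub>v x) \<bullet>c (gamma U *\<^sub>v y) = x \<bullet>c y"
proof -
  have Uc: "U \<in> carrier_mat 4 4"
    using U by (rule unitary_carrier)
  show ?thesis
    using assms by (simp add: gamma_mult_vec[OF Uc] spin_flip_cscalar_prod
        mult_mat_vec_carrier[OF Uc] mult_mat_vec_carrier[OF adj_carrier[OF Uc]]
        unitary_cscalar_prod[OF U] unitary_cscalar_prod[OF unitary_adj[OF U]])
qed

lemma unitary_gamma: "unitary 4 U \<Longrightarrow> unitary 4 (gamma U)"
  by (rule isometry_imp_unitary) (simp_all add: gamma_cscalar_prod)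

lemma gamma_spin_flip:
  assumes U: "unitary 4 U" and x: "x \<in> carrier_vec 4"
  shows "gamma U *\<^sub>v spin_flip (gamma U *\<^sub>v x) = spin_flip x"
proof -
  have Uc: "U \<in> carrier_mat 4 4"
    using U by (rule unitary_carrier)
  show ?thesis
    using x by (simp add: gamma_mult_vec[OF Uc] mult_mat_vec_carrier[OF Uc]
        mult_mat_vec_carrier[OF adj_carrier[OF Uc]] unitary_adj_mult_cancel[OF U])
qed

lemma mult_spin_flip_gamma:
  assumes U: "unitary 4 U" and x: "x \<in> carrier_vec 4"
  shows "U *\<^sub>v spin_flip (gamma U *\<^sub>v x) = spin_flip (U *\<^sub>v x)"
proof -
  have Uc: "U \<in> carrier_mat 4 4"
    using U by (rule unitary_carrier)
  show ?thesis
    using x by (simp add: gamma_mult_vec[OF Uc] mult_mat_vec_carrier[OF Uc]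
        mult_mat_vec_carrier[OF adj_carrier[OF Uc]] unitary_adj_mult_cancel[OF U])
qed

lemma gamma_eigenvector_spin_flip:
  assumes U: "unitary 4 U" and v: "v \<in> carrier_vec 4" "v \<noteq> 0\<^sub>v 4"
    and e: "gamma U *\<^sub>v v = l \<cdot>\<^sub>v v"
  shows "gamma U *\<^sub>v spin_flip v = l \<cdot>\<^sub>v spin_flip v"
proof -
  have l: "l * cnj l = 1"
    using unitary_eigenvalue_norm[OF unitary_gamma[OF U] v e] .
  have "cnj l \<cdot>\<^sub>v (gamma U *\<^sub>v spin_flip v) = spin_flip v"
    using gamma_spin_flip[OF U v(1)] v
    by (simp add: e spin_flip_smult mult_mat_vec[OF gamma_carrier])
  then have "l \<cdot>\<^sub>v spin_flip v = (l * cnj l) \<cdot>\<^sub>v (gamma U *\<^sub>v spin_flip v)"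
    by (metis smult_smult_assoc)
  then show ?thesis
    by (simp add: l)
qed

lemma gamma_spin_flip_fixed_eigenvector:
  assumes U: "unitary 4 U" and v: "v \<in> carrier_vec 4" "v \<noteq> 0\<^sub>v 4"
    and e: "gamma U *\<^sub>v v = l \<cdot>\<^sub>v v"
  shows "\<exists>w. w \<in> carrier_vec 4 \<and> w \<noteq> 0\<^sub>v 4 \<and> spin_flip w = w \<and> gamma U *\<^sub>v w = l \<cdot>\<^sub>v w \<and>
    (\<forall>u. u \<in> carrier_vec 4 \<longrightarrow> spin_flip u = u \<longrightarrow> v \<bullet>c u = 0 \<longrightarrow> w \<bullet>c u = 0)"
proof -
  have eJ: "gamma U *\<^sub>v spin_flip v = l \<cdot>\<^sub>v spin_flip v"
    using gamma_eigenvector_spin_flip[OF U v e] .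
  have Jorth: "spin_flip v \<bullet>c u = 0" if "u \<in> carrier_vec 4" "spin_flip u = u" "v \<bullet>c u = 0" for u
    using spin_flip_cscalar_prod[OF v(1) that(1)] cscalar_prod_swap[OF v(1) that(1)] that by simp
  \<comment> \<open>w is taken in span {v, J v}, which is why it inherits orthogonality to J-fixed vectors.\<close>
  show ?thesis
  proof (cases "v + spin_flip v = 0\<^sub>v 4")
    case False
    show ?thesis
      using False v e eJ Jorth
      by (intro exI[of _ "v + spin_flip v"])
        (auto simp: spin_flip_add comm_add_vec[of _ 4] mult_add_distrib_mat_vec[OF gamma_carrier]
          smult_add_distrib_vec[of _ 4] cscalar_prod_add_left[of _ 4])
  next
    case True
    then have "spin_flip v = - v"
      using v by (intro eq_vecI) (auto simp: vec_eq_iff add_eq_0_iff)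
    then show ?thesis
      using v e
      by (intro exI[of _ "\<i> \<cdot>\<^sub>v v"])
        (auto simp: spin_flip_smult mult_mat_vec[OF gamma_carrier] cscalar_prod_smult_left[of _ 4]
          smult_smult_assoc mult.commute vec_eq_iff)
  qed
qed

definition orthonormal_spin_flip_pair :: "complex vec \<Rightarrow> complex vec \<Rightarrow> bool" where
  "orthonormal_spin_flip_pair f1 f2 \<longleftrightarrow> f1 \<in> carrier_vec 4 \<and> f2 \<in> carrier_vec 4 \<and>
     spin_flip f1 = f1 \<and> spin_flip f2 = f2 \<and> f1 \<bullet>c f1 = 1 \<and> f2 \<bullet>c f2 = 1 \<and> f1 \<bullet>c f2 = 0"

lemma gamma_orthonormal_spin_flip_eigenvectors:
  assumes U: "unitary 4 U"
  shows "\<exists>f1 f2 m1 m2. orthonormal_spin_flip_pair f1 f2 \<and>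
    gamma U *\<^sub>v f1 = m1 \<cdot>\<^sub>v f1 \<and> gamma U *\<^sub>v f2 = m2 \<cdot>\<^sub>v f2"
proof -
  have S: "unitary 4 (gamma U)"
    using U by (rule unitary_gamma)
  obtain v l where v: "v \<in> carrier_vec 4" "v \<noteq> 0\<^sub>v 4" and ev: "gamma U *\<^sub>v v = l \<cdot>\<^sub>v v"
    using unitary_two_orthogonal_eigenvectors[OF S] by auto
  obtain w1 where w1: "w1 \<in> carrier_vec 4" "w1 \<noteq> 0\<^sub>v 4" "spin_flip w1 = w1"
    and ew1: "gamma U *\<^sub>v w1 = l \<cdot>\<^sub>v w1"
    using gamma_spin_flip_fixed_eigenvector[OF U v ev] by blast
  obtain g m where g: "g \<in> carrier_vec 4" "g \<noteq> 0\<^sub>v 4" and gw1: "g \<bullet>c w1 = 0"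
    and eg: "gamma U *\<^sub>v g = m \<cdot>\<^sub>v g"
    using unitary_eigenvector_orthogonal_to_eigenvector[OF S _ w1(1,2) ew1] by auto
  obtain w2 where w2: "w2 \<in> carrier_vec 4" "w2 \<noteq> 0\<^sub>v 4" "spin_flip w2 = w2"
    and ew2: "gamma U *\<^sub>v w2 = m \<cdot>\<^sub>v w2" and w21: "w2 \<bullet>c w1 = 0"
    using gamma_spin_flip_fixed_eigenvector[OF U g eg] w1 gw1 by blast
  obtain r1 r2 where r1: "(complex_of_real r1 \<cdot>\<^sub>v w1) \<bullet>c (complex_of_real r1 \<cdot>\<^sub>v w1) = 1"
    and r2: "(complex_of_real r2 \<cdot>\<^sub>v w2) \<bullet>c (complex_of_real r2 \<cdot>\<^sub>v w2) = 1"
    using exists_real_normalizer w1 w2 by metis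
  have "w1 \<bullet>c w2 = 0"
    using w21 cscalar_prod_swap[OF w2(1) w1(1)] by simp
  then have "orthonormal_spin_flip_pair (complex_of_real r1 \<cdot>\<^sub>v w1) (complex_of_real r2 \<cdot>\<^sub>v w2)"
    using w1 w2 r1 r2
    by (simp add: orthonormal_spin_flip_pair_def spin_flip_smult cscalar_prod_smult_left[of _ 4]
        cscalar_prod_smult_right[of _ 4])
  moreover have "gamma U *\<^sub>v (c \<cdot>\<^sub>v w) = k \<cdot>\<^sub>v (c \<cdot>\<^sub>v w)"
    if "w \<in> carrier_vec 4" "gamma U *\<^sub>v w = k \<cdot>\<^sub>v w" for c k w
    using that by (simp add: mult_mat_vec[OF gamma_carrier] smult_smult_assoc mult.commute)
  ultimately show ?thesis
    using w1 w2 ew1 ew2 by blast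
qed

lemma spin_flip_fixed_image:
  assumes U: "unitary 4 U" and f: "f \<in> carrier_vec 4" "f \<noteq> 0\<^sub>v 4" "spin_flip f = f"
    and e: "gamma U *\<^sub>v f = m \<cdot>\<^sub>v f"
  shows "\<exists>z. z * cnj z = 1 \<and> spin_flip (z \<cdot>\<^sub>v (U *\<^sub>v f)) = z \<cdot>\<^sub>v (U *\<^sub>v f)"
proof -
  \<comment> \<open>J (z U f) = cnj z cnj m U f, which equals z U f when z * z = cnj m and |z| = 1.\<close>
  define z where "z = csqrt (cnj m)"
  have "m * cnj m = 1"
    using unitary_eigenvalue_norm[OF unitary_gamma[OF U] f(1,2) e] .
  then have "cmod m ^ 2 = 1"
    by (metis complex_norm_square of_real_eq_1_iff of_real_power)
  then have "cmod m = 1"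
    using norm_ge_zero[of m] by (auto simp: power2_eq_1_iff)
  then have zz: "z * cnj z = 1"
    by (simp add: z_def complex_norm_square[symmetric])
  have z2: "z * z = cnj m"
    by (simp add: z_def flip: power2_eq_square)
  have Uc: "U \<in> carrier_mat 4 4"
    using U by (rule unitary_carrier)
  have "spin_flip (z \<cdot>\<^sub>v (U *\<^sub>v f)) = cnj z \<cdot>\<^sub>v (U *\<^sub>v spin_flip (gamma U *\<^sub>v f))"
    using f Uc by (simp add: spin_flip_smult mult_spin_flip_gamma[OF U])
  also have "\<dots> = (cnj z * cnj m) \<cdot>\<^sub>v (U *\<^sub>v f)"
    using f Uc by (simp add: e spin_flip_smult mult_mat_vec[OF Uc] smult_smult_assoc)
  also have "cnj z * cnj m = z"
    using zz z2 by (metis mult.assoc mult.commute mult_1)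
  finally show ?thesis
    using zz by blast
qed

lemma unitary_maps_spin_flip_pair:
  assumes U: "unitary 4 U"
  shows "\<exists>f1 f2 g1 g2 c1 c2. orthonormal_spin_flip_pair f1 f2 \<and> orthonormal_spin_flip_pair g1 g2 \<and>
    c1 \<noteq> 0 \<and> c2 \<noteq> 0 \<and> U *\<^sub>v f1 = c1 \<cdot>\<^sub>v g1 \<and> U *\<^sub>v f2 = c2 \<cdot>\<^sub>v g2"
proof -
  have Uc: "U \<in> carrier_mat 4 4"
    using U by (rule unitary_carrier)
  obtain f1 f2 m1 m2 where pair: "orthonormal_spin_flip_pair f1 f2"
    and e: "gamma U *\<^sub>v f1 = m1 \<cdot>\<^sub>v f1" "gamma U *\<^sub>v f2 = m2 \<cdot>\<^sub>v f2"
    using gamma_orthonormal_spin_flip_eigenvectors[OF U] by blast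
  have f: "f1 \<in> carrier_vec 4" "f2 \<in> carrier_vec 4" "spin_flip f1 = f1" "spin_flip f2 = f2"
    and n: "f1 \<bullet>c f1 = 1" "f2 \<bullet>c f2 = 1" "f1 \<bullet>c f2 = 0"
    using pair by (simp_all add: orthonormal_spin_flip_pair_def)
  have "f1 \<noteq> 0\<^sub>v 4" "f2 \<noteq> 0\<^sub>v 4"
    using n by auto
  then obtain z1 z2 where z: "z1 * cnj z1 = 1" "z2 * cnj z2 = 1"
    and "spin_flip (z1 \<cdot>\<^sub>v (U *\<^sub>v f1)) = z1 \<cdot>\<^sub>v (U *\<^sub>v f1)"
      "spin_flip (z2 \<cdot>\<^sub>v (U *\<^sub>v f2)) = z2 \<cdot>\<^sub>v (U *\<^sub>v f2)"
    using spin_flip_fixed_image[OF U f(1) _ f(3) e(1)] spin_flip_fixed_image[OF U f(2) _ f(4) e(2)]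
    by metis
  moreover have "cnj z1 * z1 = 1" "cnj z2 * z2 = 1"
    using z by (simp_all add: mult.commute)
  ultimately have "orthonormal_spin_flip_pair (z1 \<cdot>\<^sub>v (U *\<^sub>v f1)) (z2 \<cdot>\<^sub>v (U *\<^sub>v f2))"
    using f n z Uc by (simp add: orthonormal_spin_flip_pair_def cscalar_prod_smult_right[of _ 4]
        mult_mat_vec_carrier[OF Uc] unitary_cscalar_prod[OF U])
  moreover have "U *\<^sub>v f = cnj z \<cdot>\<^sub>v (z \<cdot>\<^sub>v (U *\<^sub>v f))" if "z * cnj z = 1" for z f
    using that by (simp add: smult_smult_assoc mult.commute)
  moreover have "cnj z1 \<noteq> 0" "cnj z2 \<noteq> 0"
    using z by auto
  ultimately show ?thesis
    using pair z by blast
qed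

section \<open>Local unitaries adapted to a spin-flip-fixed pair\<close>

lemma rank_one_2x2_factors:
  fixes p00 p01 p10 p11 :: complex
  assumes "p00 * p11 = p01 * p10"
  shows "\<exists>a0 a1 b0 b1. p00 = a0 * b0 \<and> p01 = a0 * b1 \<and> p10 = a1 * b0 \<and> p11 = a1 * b1"
proof (cases "p00 = 0")
  case False
  then show ?thesis
    using assms by (intro exI[of _ 1] exI[of _ "p10 / p00"] exI[of _ p00] exI[of _ p01])
      (auto simp: field_simps)
next
  case True
  show ?thesis
  proof (cases "p01 = 0")
    case False
    then show ?thesis
      using assms True by (intro exI[of _ 1] exI[of _ "p11 / p01"] exI[of _ p00] exI[of _ p01]) auto
  next
    case False': True
    then show ?thesis
      using True by (intro exI[of _ 0] exI[of _ 1] exI[of _ p10] exI[of _ p11]) auto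
  qed
qed

lemma product_vector_unit_factors:
  assumes p: "p \<in> carrier_vec 4" and prod: "p $ 0 * p $ 3 = p $ 1 * p $ 2" and norm: "p \<bullet>c p = 1"
  shows "\<exists>a0 a1 b0 b1. cmod a0 ^ 2 + cmod a1 ^ 2 = 1 \<and> cmod b0 ^ 2 + cmod b1 ^ 2 = 1 \<and>
    p $ 0 = a0 * b0 \<and> p $ 1 = a0 * b1 \<and> p $ 2 = a1 * b0 \<and> p $ 3 = a1 * b1"
proof -
  obtain a0 a1 b0 b1
    where ab: "p $ 0 = a0 * b0" "p $ 1 = a0 * b1" "p $ 2 = a1 * b0" "p $ 3 = a1 * b1"
    using rank_one_2x2_factors[OF prod] by blast
  define s where "s = cmod a0 ^ 2 + cmod a1 ^ 2"
  define t where "t = cmod b0 ^ 2 + cmod b1 ^ 2"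
  have "complex_of_real (s * t) = p \<bullet>c p"
    using p by (simp add: cscalar_prod_self_eq sum_atLeast0LessThan_4 ab ab(2)[unfolded One_nat_def]
        s_def t_def norm_mult power_mult_distrib algebra_simps
        del: of_real_add of_real_mult of_real_power)
  then have st: "s * t = 1"
    using norm by (metis of_real_eq_1_iff)
  moreover have "s \<ge> 0"
    by (simp add: s_def)
  ultimately have s: "s > 0"
    by (cases "s = 0") auto
  define r where "r = sqrt s"
  have "cmod (a0 / r) ^ 2 + cmod (a1 / r) ^ 2 = s / r ^ 2"
    by (simp add: s_def norm_divide power_divide add_divide_distrib)
  moreover have "cmod (r * b0) ^ 2 + cmod (r * b1) ^ 2 = r ^ 2 * t"
    by (simp add: t_def norm_mult power_mult_distrib distrib_left)
  ultimately have "cmod (a0 / r) ^ 2 + cmod (a1 / r) ^ 2 = 1"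
    "cmod (r * b0) ^ 2 + cmod (r * b1) ^ 2 = 1"
    using s st by (simp_all add: r_def)
  moreover have "a * b = (a / r) * (r * b)" for a b :: complex
    using s by (simp add: r_def field_simps)
  ultimately show ?thesis
    using ab by metis
qed

lemma local_unitary_with_columns:
  assumes p: "p \<in> carrier_vec 4" "p $ 0 * p $ 3 = p $ 1 * p $ 2" "p \<bullet>c p = 1"
  shows "\<exists>A B. unitary 2 A \<and> unitary 2 B \<and>
    col (kron2 A B) 0 = p \<and> col (kron2 A B) 3 = - spin_flip p"
proof -
  obtain a0 a1 b0 b1 where a: "cmod a0 ^ 2 + cmod a1 ^ 2 = 1" and b: "cmod b0 ^ 2 + cmod b1 ^ 2 = 1"
    and ab: "p $ 0 = a0 * b0" "p $ 1 = a0 * b1" "p $ 2 = a1 * b0" "p $ 3 = a1 * b1"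
    using product_vector_unit_factors[OF p] by blast
  have "col (kron2 (su2 a0 a1) (su2 b0 b1)) 0 = p"
    "col (kron2 (su2 a0 a1) (su2 b0 b1)) 3 = - spin_flip p"
    using p ab by (auto intro!: eq_vecI simp: kron2_index su2_def mat_of_rows_list_def spin_flip_def
        dest!: less_4_cases_nat)
  then show ?thesis
    using unitary_su2[OF a] unitary_su2[OF b] by blast
qed

lemma spin_flip_pair_product_vector:
  assumes "orthonormal_spin_flip_pair f1 f2"
  defines "q \<equiv> f1 + \<i> \<cdot>\<^sub>v f2"
  shows "q $ 0 * q $ 3 = q $ 1 * q $ 2" "q \<bullet>c q = 2" "spin_flip q = f1 - \<i> \<cdot>\<^sub>v f2"
proof -
  have f: "f1 \<in> carrier_vec 4" "f2 \<in> carrier_vec 4" "spin_flip f1 = f1" "spin_flip f2 = f2"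
    and n: "f1 \<bullet>c f1 = 1" "f2 \<bullet>c f2 = 1" "f1 \<bullet>c f2 = 0"
    using assms by (simp_all add: orthonormal_spin_flip_pair_def)
  note comp = spin_flip_fixed_components[OF f(3)] spin_flip_fixed_components[OF f(4)]
  have "2 * (q $ 0 * q $ 3 - q $ 1 * q $ 2) = f2 \<bullet>c f2 - f1 \<bullet>c f1 - 2 * \<i> * (f1 \<bullet>c f2)"
    using f comp by (simp add: q_def scalar_prod_def sum_atLeast0LessThan_4 algebra_simps)
  then show "q $ 0 * q $ 3 = q $ 1 * q $ 2"
    using n by simp
  have "q \<bullet>c q = f1 \<bullet>c f1 + \<i> * (f2 \<bullet>c f1) - \<i> * (f1 \<bullet>c f2) + f2 \<bullet>c f2"
    using f by (simp add: q_def scalar_prod_def sum_atLeast0LessThan_4 algebra_simps)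
  then show "q \<bullet>c q = 2"
    using n cscalar_prod_swap[OF f(1,2)] by simp
  show "spin_flip q = f1 - \<i> \<cdot>\<^sub>v f2"
    using f by (intro eq_vecI) (auto simp: q_def spin_flip_add spin_flip_smult)
qed

definition outer_columns :: "complex mat \<Rightarrow> complex vec \<Rightarrow> complex vec \<Rightarrow> bool" where
  "outer_columns L f1 f2 \<longleftrightarrow>
     (let c = complex_of_real (1 / sqrt 2) in
      col L 0 = c \<cdot>\<^sub>v f1 + (\<i> * c) \<cdot>\<^sub>v f2 \<and> col L 3 = (- c) \<cdot>\<^sub>v f1 + (\<i> * c) \<cdot>\<^sub>v f2)"

lemma local_unitary_outer_columns:
  assumes pair: "orthonormal_spin_flip_pair f1 f2"
  shows "\<exists>A B. unitary 2 A \<and> unitary 2 B \<and> outer_columns (kron2 A B) f1 f2"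
proof -
  define c where "c = complex_of_real (1 / sqrt 2)"
  define q where "q = f1 + \<i> \<cdot>\<^sub>v f2"
  have f: "f1 \<in> carrier_vec 4" "f2 \<in> carrier_vec 4"
    using pair by (simp_all add: orthonormal_spin_flip_pair_def)
  note q = spin_flip_pair_product_vector[OF pair, folded q_def]
  have c: "c * c = 1 / 2" "cnj c = c"
    by (simp_all add: c_def flip: of_real_mult)
  have qc: "q \<in> carrier_vec 4"
    using f by (simp add: q_def)
  have "(c \<cdot>\<^sub>v q) $ 0 * (c \<cdot>\<^sub>v q) $ 3 = (c \<cdot>\<^sub>v q) $ 1 * (c \<cdot>\<^sub>v q) $ 2"
    using qc q(1) by (simp add: algebra_simps)
  moreover have "(c \<cdot>\<^sub>v q) \<bullet>c (c \<cdot>\<^sub>v q) = 1"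
    using qc q(2) c
    by (simp add: cscalar_prod_smult_left[of _ 4] cscalar_prod_smult_right[of _ 4] mult.assoc)
  ultimately obtain A B where AB: "unitary 2 A" "unitary 2 B"
    and cols: "col (kron2 A B) 0 = c \<cdot>\<^sub>v q" "col (kron2 A B) 3 = - spin_flip (c \<cdot>\<^sub>v q)"
    using local_unitary_with_columns[of "c \<cdot>\<^sub>v q"] qc by auto
  have "c \<cdot>\<^sub>v q = c \<cdot>\<^sub>v f1 + (\<i> * c) \<cdot>\<^sub>v f2"
    using f by (intro eq_vecI) (auto simp: q_def algebra_simps)
  moreover have "- spin_flip (c \<cdot>\<^sub>v q) = (- c) \<cdot>\<^sub>v f1 + (\<i> * c) \<cdot>\<^sub>v f2"
    using f qc c q(3) by (intro eq_vecI) (auto simp: spin_flip_smult algebra_simps)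
  ultimately have "outer_columns (kron2 A B) f1 f2"
    using cols unfolding outer_columns_def Let_def c_def by simp
  then show ?thesis
    using AB by blast
qed

lemma outer_columns_orthogonal:
  assumes L: "unitary 4 L" and outer: "outer_columns L f1 f2"
    and f: "f1 \<in> carrier_vec 4" "f2 \<in> carrier_vec 4" and k: "k = 1 \<or> k = 2"
  shows "f1 \<bullet>c col L k = 0 \<and> f2 \<bullet>c col L k = 0"
proof -
  define c where "c = complex_of_real (1 / sqrt 2)"
  have c: "c \<noteq> 0"
    by (simp add: c_def)
  have Lk: "col L k \<in> carrier_vec 4"
    using k col_carrier_vec[OF _ unitary_carrier[OF L], of k] by auto
  have cols: "col L 0 = c \<cdot>\<^sub>v f1 + (\<i> * c) \<cdot>\<^sub>v f2" "col L 3 = (- c) \<cdot>\<^sub>v f1 + (\<i> * c) \<cdot>\<^sub>v f2"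
    using outer by (simp_all add: outer_columns_def Let_def c_def)
  have "col L 0 \<bullet>c col L k = 0" "col L 3 \<bullet>c col L k = 0"
    using unitary_col_cscalar_prod[OF L] k by auto
  then have e: "c * (f1 \<bullet>c col L k) + \<i> * c * (f2 \<bullet>c col L k) = 0"
    "- c * (f1 \<bullet>c col L k) + \<i> * c * (f2 \<bullet>c col L k) = 0"
    using f Lk by (simp_all add: cols cscalar_prod_add_left[of _ 4] cscalar_prod_smult_left[of _ 4])
  have "2 * c * (f1 \<bullet>c col L k) = (c * (f1 \<bullet>c col L k) + \<i> * c * (f2 \<bullet>c col L k))
      - (- c * (f1 \<bullet>c col L k) + \<i> * c * (f2 \<bullet>c col L k))"
    "2 * \<i> * c * (f2 \<bullet>c col L k) = (c * (f1 \<bullet>c col L k) + \<i> * c * (f2 \<bullet>c col L k))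
      + (- c * (f1 \<bullet>c col L k) + \<i> * c * (f2 \<bullet>c col L k))"
    by (simp_all add: algebra_simps)
  then show ?thesis
    using c unfolding e by simp
qed

lemma outer_columns_entry_zero:
  assumes U: "U \<in> carrier_mat 4 4" and L1: "unitary 4 L1" and L2: "L2 \<in> carrier_mat 4 4"
    and outer: "outer_columns L1 g1 g2" and g: "g1 \<in> carrier_vec 4" "g2 \<in> carrier_vec 4"
    and f: "f1 \<in> carrier_vec 4" "f2 \<in> carrier_vec 4"
    and Uf: "U *\<^sub>v f1 = c1 \<cdot>\<^sub>v g1" "U *\<^sub>v f2 = c2 \<cdot>\<^sub>v g2"
    and col: "col L2 j = x \<cdot>\<^sub>v f1 + y \<cdot>\<^sub>v f2" and ij: "i = 1 \<or> i = 2" "j < 4"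
  shows "(adj L1 * U * L2) $$ (i, j) = 0"
proof -
  have L1c: "L1 \<in> carrier_mat 4 4"
    using L1 by (rule unitary_carrier)
  have Li: "col L1 i \<in> carrier_vec 4"
    using ij col_carrier_vec[OF _ L1c, of i] by auto
  have "(adj L1 * U * L2) $$ (i, j) = (U *\<^sub>v col L2 j) \<bullet>c col L1 i"
    using adj_mult_mult_index[OF L1c U L2 _ ij(2)] ij by auto
  also have "\<dots> = ((x * c1) \<cdot>\<^sub>v g1 + (y * c2) \<cdot>\<^sub>v g2) \<bullet>c col L1 i"
    using f
    by (simp add: col mult_add_distrib_mat_vec[OF U] mult_mat_vec[OF U] Uf smult_smult_assoc)
  also have "\<dots> = 0"
    using outer_columns_orthogonal[OF L1 outer g ij(1)] g Li
    by (simp add: cscalar_prod_add_left[of _ 4] cscalar_prod_smult_left[of _ 4])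
  finally show ?thesis .
qed

lemma outer_columns_block_pattern:
  assumes U: "unitary 4 U" and L1: "unitary 4 L1" and L2: "unitary 4 L2"
    and f: "f1 \<in> carrier_vec 4" "f2 \<in> carrier_vec 4"
    and g: "g1 \<in> carrier_vec 4" "g2 \<in> carrier_vec 4"
    and outer: "outer_columns L1 g1 g2" "outer_columns L2 f1 f2"
    and Uf: "U *\<^sub>v f1 = c1 \<cdot>\<^sub>v g1" "U *\<^sub>v f2 = c2 \<cdot>\<^sub>v g2" and c: "c1 \<noteq> 0" "c2 \<noteq> 0"
    and ij: "i < 4" "j < 4" "(i \<in> {0, 3}) \<noteq> (j \<in> {0, 3})"
  shows "(adj L1 * U * L2) $$ (i, j) = 0"
proof -
  have Uc: "U \<in> carrier_mat 4 4" and L1c: "L1 \<in> carrier_mat 4 4" and L2c: "L2 \<in> carrier_mat 4 4"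
    using U L1 L2 by (simp_all add: unitary_carrier)
  have outer_col: "\<exists>x y. col L k = x \<cdot>\<^sub>v v1 + y \<cdot>\<^sub>v v2"
    if "outer_columns L v1 v2" "k \<in> {0, 3}" for L v1 v2 and k :: nat
    using that by (auto simp: outer_columns_def Let_def)
  consider "j \<in> {0, 3}" "i = 1 \<or> i = 2" | "i \<in> {0, 3}" "j = 1 \<or> j = 2"
    using ij by fastforce
  then show ?thesis
  proof cases
    case 1
    then show ?thesis
      using outer_col[OF outer(2) 1(1)]
        outer_columns_entry_zero[OF Uc L1 L2c outer(1) g f Uf _ 1(2) ij(2)]
      by blast
  next
    case 2
    \<comment> \<open>Case 1 applied to adj V = adj L2 * adj U * L1, with the roles of the two pairs swapped.\<close>
    have "adj U *\<^sub>v g1 = (1 / c1) \<cdot>\<^sub>v f1" "adj U *\<^sub>v g2 = (1 / c2) \<cdot>\<^sub>v f2"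
      using unitary_adj_mult_vec_eq[OF U] f g Uf c by simp_all
    then have "(adj L2 * adj U * L1) $$ (j, i) = 0"
      using outer_col[OF outer(1) 2(1)]
        outer_columns_entry_zero[OF adj_carrier[OF Uc] L2 L1c outer(2) f g _ _ _ 2(2) ij(1)]
      by blast
    moreover have "adj (adj L1 * U * L2) = adj L2 * adj U * L1"
      using Uc L1c L2c
      by (simp add: adj_mult[of _ 4 4 _ 4] adj_adj assoc_mult_mat[of _ 4 4 _ 4 _ 4])
    moreover have "(adj L1 * U * L2) $$ (i, j) = cnj (adj (adj L1 * U * L2) $$ (j, i))"
      using ij L1c L2c by (simp add: adj_def)
    ultimately show ?thesis
      by simp
  qed
qed

lemma exists_local_unitaries_block_pattern:
  assumes U: "unitary 4 U"
  shows "\<exists>A1 B1 A2 B2. unitary 2 A1 \<and> unitary 2 B1 \<and> unitary 2 A2 \<and> unitary 2 B2 \<and>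
    (\<forall>i<4. \<forall>j<4. (i \<in> {0, 3}) \<noteq> (j \<in> {0, 3}) \<longrightarrow>
      (adj (kron2 A1 B1) * U * kron2 A2 B2) $$ (i, j) = 0)"
proof -
  obtain f1 f2 g1 g2 c1 c2 where f: "orthonormal_spin_flip_pair f1 f2"
    and g: "orthonormal_spin_flip_pair g1 g2" and c: "c1 \<noteq> 0" "c2 \<noteq> 0"
    and Uf: "U *\<^sub>v f1 = c1 \<cdot>\<^sub>v g1" "U *\<^sub>v f2 = c2 \<cdot>\<^sub>v g2"
    using unitary_maps_spin_flip_pair[OF U] by blast
  obtain A1 B1 A2 B2 where AB: "unitary 2 A1" "unitary 2 B1" "unitary 2 A2" "unitary 2 B2"
    and outer: "outer_columns (kron2 A1 B1) g1 g2" "outer_columns (kron2 A2 B2) f1 f2"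
    using local_unitary_outer_columns[OF g] local_unitary_outer_columns[OF f] by blast
  have "(adj (kron2 A1 B1) * U * kron2 A2 B2) $$ (i, j) = 0"
    if "i < 4" "j < 4" "(i \<in> {0, 3}) \<noteq> (j \<in> {0, 3})" for i j
    using f g
    by (intro outer_columns_block_pattern[OF U unitary_kron2[OF AB(1,2)] unitary_kron2[OF AB(3,4)]
          _ _ _ _ outer Uf c that]) (simp_all add: orthonormal_spin_flip_pair_def)
  then show ?thesis
    using AB by blast
qed

theorem proposition3:
  fixes U :: "complex mat"
  assumes "unitary 4 U"
  shows "\<exists>U1 U2 U3 U4 U5 U6. unitary 2 U1 \<and> unitary 2 U2 \<and> unitary 2 U3 \<and>
           unitary 2 U4 \<and> unitary 2 U5 \<and> unitary 2 U6 \<and>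
           U = kron2 U1 U2 * botCNOT * ctrl U3 * kron2 (1\<^sub>m 2) U4 * botCNOT * kron2 U5 U6"
proof -
  obtain A1 B1 A2 B2 where AB: "unitary 2 A1" "unitary 2 B1" "unitary 2 A2" "unitary 2 B2"
    and pattern: "\<forall>i<4. \<forall>j<4. (i \<in> {0, 3}) \<noteq> (j \<in> {0, 3}) \<longrightarrow>
      (adj (kron2 A1 B1) * U * kron2 A2 B2) $$ (i, j) = 0"
    using exists_local_unitaries_block_pattern[OF assms] by blast
  define V where "V = adj (kron2 A1 B1) * U * kron2 A2 B2"
  have "unitary 4 V"
    unfolding V_def using assms AB by (intro unitary_mult unitary_adj unitary_kron2)
  then obtain U3 U4 where U34: "unitary 2 U3" "unitary 2 U4"
    and V: "V = botCNOT * ctrl U3 * kron2 (1\<^sub>m 2) U4 * botCNOT"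
    using botCNOT_block_factorization pattern unfolding V_def by blast
  have "U = kron2 A1 B1 * V * adj (kron2 A2 B2)"
    unfolding V_def using unitary_conj_cancel[OF unitary_kron2[OF AB(1,2)] unitary_kron2[OF AB(3,4)]
        unitary_carrier[OF assms]] by simp
  also have "\<dots> = kron2 A1 B1 * botCNOT * ctrl U3 * kron2 (1\<^sub>m 2) U4 * botCNOT *
      kron2 (adj A2) (adj B2)"
    using AB U34 by (simp add: V adj_kron2 unitary_carrier ctrl_carrier
        assoc_mult_mat[of _ 4 4 _ 4 _ 4] mult_carrier_mat[of _ 4 4 _ 4])
  finally show ?thesis
    using AB U34 unitary_adj[OF AB(3)] unitary_adj[OF AB(4)] by blast
qed

end
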